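(* Let $\sigma$ be a two-qubit state that is diagonal in the Bell basis $\{|\Phi^+\rangle,|\Phi^-\rangle,|\Psi^+\rangle,|\Psi^-\rangle\}$, with systems $\hat A_i$ (first qubit) and $\hat B_i$ (second qubit). Suppose there are qubit observables $A_0,A_1,B_0,B_1$ of the form $\vec v\cdot\vec\sigma$ with unit vectors $\vec v\in\mathbb{R}^3$ such that the CHSH winning probability $\omega=\frac12+\frac18\mathrm{Tr}\big[\sigma(A_0\otimes B_0+A_0\otimes B_1+A_1\otimes B_0-A_1\otimes B_1)\big]$ lies in $\left[\frac34,\frac{2+\sqrt2}{4}\right]$. Then $$H(\hat A_i|\hat B_i)_\sigma\le 2h\left(\frac12-\frac{2\omega-1}{\sqrt2}\right)-1.$$
   Context: $H(\hat A_i|\hat B_i)_\sigma=H(\sigma_{\hat A_i\hat B_i})-H(\sigma_{\hat B_i})$ is the conditional von Neumann entropy; $h(p)=-p\log p-(1-p)\log(1-p)$ is the binary entropy, logarithms base 2. $|\Phi^\pm\rangle=(|00\rangle\pm|11\rangle)/\sqrt2$, $|\Psi^\pm\rangle=(|01\rangle\pm|10\rangle)/\sqrt2$; $\vec\sigma=(\sigma_x,\sigma_y,\sigma_z)$ are the Pauli matrices. The CHSH value $\beta$ and winning probability are related by $\omega=\frac12+\frac\beta8$. *)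

theory Defs
  imports Complex_Main "Jordan_Normal_Form.Char_Poly"
begin

definition ent_term :: "real \<Rightarrow> real" where
  "ent_term x = (if x \<le> 0 then 0 else - x * log 2 x)"

definition bin_entropy :: "real \<Rightarrow> real" where
  "bin_entropy p = ent_term p + ent_term (1 - p)"

definition pauli_x :: "complex mat" where
  "pauli_x = mat_of_rows_list 2 [[0, 1], [1, 0]]"
definition pauli_y :: "complex mat" where
  "pauli_y = mat_of_rows_list 2 [[0, -\<i>], [\<i>, 0]]"
definition pauli_z :: "complex mat" where
  "pauli_z = mat_of_rows_list 2 [[1, 0], [0, -1]]"

definition qubit_obs :: "real \<Rightarrow> real \<Rightarrow> real \<Rightarrow> complex mat" where
  "qubit_obs v1 v2 v3 = complex_of_real v1 \<cdot>\<^sub>m pauli_x + complex_of_real v2 \<cdot>\<^sub>m pauli_y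
                         + complex_of_real v3 \<cdot>\<^sub>m pauli_z"

(* Kronecker product of two 2x2 matrices; basis index of |a b> is 2*a + b *)
definition kron2 :: "complex mat \<Rightarrow> complex mat \<Rightarrow> complex mat" where
  "kron2 A B = mat 4 4 (\<lambda>(i, j). A $$ (i div 2, j div 2) * B $$ (i mod 2, j mod 2))"

definition mtrace :: "complex mat \<Rightarrow> complex" where
  "mtrace M = (\<Sum>i<dim_row M. M $$ (i, i))"

definition ptrace_A :: "complex mat \<Rightarrow> complex mat" where
  "ptrace_A M = mat 2 2 (\<lambda>(i, j). M $$ (i, j) + M $$ (2 + i, 2 + j))"

(* Bell states in the computational basis |00>,|01>,|10>,|11> *)
definition bell_phi_plus :: "complex vec" where
  "bell_phi_plus = vec_of_list [1 / sqrt 2, 0, 0, 1 / sqrt 2]"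
definition bell_phi_minus :: "complex vec" where
  "bell_phi_minus = vec_of_list [1 / sqrt 2, 0, 0, - 1 / sqrt 2]"
definition bell_psi_plus :: "complex vec" where
  "bell_psi_plus = vec_of_list [0, 1 / sqrt 2, 1 / sqrt 2, 0]"
definition bell_psi_minus :: "complex vec" where
  "bell_psi_minus = vec_of_list [0, 1 / sqrt 2, - 1 / sqrt 2, 0]"

definition proj :: "complex vec \<Rightarrow> complex mat" where
  "proj v = mat (dim_vec v) (dim_vec v) (\<lambda>(i, j). v $ i * cnj (v $ j))"

definition bell_diag :: "real \<Rightarrow> real \<Rightarrow> real \<Rightarrow> real \<Rightarrow> complex mat" where
  "bell_diag p1 p2 p3 p4 =
     complex_of_real p1 \<cdot>\<^sub>m proj bell_phi_plus + complex_of_real p2 \<cdot>\<^sub>m proj bell_phi_minus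
   + complex_of_real p3 \<cdot>\<^sub>m proj bell_psi_plus + complex_of_real p4 \<cdot>\<^sub>m proj bell_psi_minus"

(* von Neumann entropy (base 2): - sum over eigenvalues (with algebraic multiplicity,
   i.e. roots of the characteristic polynomial) of lambda log lambda *)
definition vn_entropy :: "complex mat \<Rightarrow> real" where
  "vn_entropy M = (\<Sum>z\<in>{z. poly (char_poly M) z = 0}.
                     real (order z (char_poly M)) * ent_term (Re z))"

definition cond_entropy :: "complex mat \<Rightarrow> real" where
  "cond_entropy M = vn_entropy M - vn_entropy (ptrace_A M)"

definition chsh_omega :: "complex mat \<Rightarrow> complex mat \<Rightarrow> complex mat \<Rightarrow> complex mat \<Rightarrow> complex mat \<Rightarrow> real" where
  "chsh_omega \<rho> A0 A1 B0 B1 = 1/2 + Re (mtrace (\<rho> * (kron2 A0 B0 + kron2 A0 B1 + kron2 A1 B0 - kron2 A1 B1))) / 8"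

end

(*
  A Bell-diagonal state with weights p1, ..., p4 has eigenvalues p1, ..., p4 and a maximally
  mixed marginal, so H(A|B) = sum_k eta(p_k) - 1 with eta(x) = -x log x.  Its correlation
  matrix is diag(t1, t2, t3) with t_k affine in p, and by the Horodecki bound the CHSH value
  beta is at most 2 sqrt(t_i^2 + t_j^2) for the two largest |t_k|.  Arranging p as a 2x2 table
  whose two marginals have biases t_i and t_j, subadditivity of entropy gives
  sum_k eta(p_k) <= h((1 + t_i)/2) + h((1 + t_j)/2).  Finally g(s) = h((1 - sqrt s)/2) is
  concave and decreasing on [0, 1] (its derivative is -artanh(sqrt s)/(2 ln 2 sqrt s), and
  artanh r / r increases), so g(t_i^2) + g(t_j^2) <= 2 g((t_i^2 + t_j^2)/2) <= 2 g(beta^2/8).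
*)
theory Submission
  imports Defs "HOL-Real_Asymp.Real_Asymp"
begin

section \<open>Eigenvalues and von Neumann entropy\<close>

lemma sum_list_map_eq_sum_count_of_nat:
  "sum_list (map f xs) = (\<Sum>x\<in>set xs. of_nat (count_list xs x) * (f x :: 'b :: semiring_1))"
proof (induction xs)
  case (Cons a xs)
  have "(\<Sum>x\<in>set (a # xs). of_nat (count_list (a # xs) x) * f x)
      = (\<Sum>x\<in>insert a (set xs). of_nat (count_list xs x) * f x + (if x = a then f x else 0))"
    by (intro sum.cong) (auto simp: algebra_simps)
  also have "\<dots> = (\<Sum>x\<in>set xs. of_nat (count_list xs x) * f x) + f a"
    by (cases "a \<in> set xs") (simp_all add: sum.distrib sum.delta insert_absorb count_list_0_iff)
  finally show ?case using Cons.IH by (simp add: add.commute)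
qed simp

lemma order_linear_factors:
  "order z (\<Prod>a\<leftarrow>as. [:-a, 1:]) = count_list as z"
proof -
  have "order z (\<Prod>a\<leftarrow>as. [:-a, 1:]) = (\<Sum>a\<leftarrow>as. order z [:-a, 1:])"
    by (subst order_prod_list) (auto simp: o_def)
  also have "\<dots> = count_list as z" by (induction as) (auto simp: order_linear')
  finally show ?thesis .
qed

lemma vn_entropy_linear_factors:
  assumes "char_poly A = (\<Prod>a\<leftarrow>as. [:-a, 1:])"
  shows "vn_entropy A = (\<Sum>a\<leftarrow>as. ent_term (Re a))"
proof -
  have "{z. poly (char_poly A) z = 0} = set as"
    by (auto simp: assms poly_prod_list prod_list_zero_iff)
  then show ?thesis
    by (simp add: vn_entropy_def assms order_linear_factors sum_list_map_eq_sum_count_of_nat)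
qed

lemma vn_entropy_mat_diag: "vn_entropy (mat_diag n f) = (\<Sum>i<n. ent_term (Re (f i)))"
proof -
  have "char_poly (mat_diag n f) = (\<Prod>a\<leftarrow>map f [0..<n]. [:-a, 1:])"
    by (subst char_poly_upper_triangular[of _ n])
      (auto simp: mat_diag_def diag_mat_def intro!: arg_cong[where f = prod_list] map_cong)
  then have "vn_entropy (mat_diag n f) = (\<Sum>a\<leftarrow>map f [0..<n]. ent_term (Re a))"
    by (rule vn_entropy_linear_factors)
  then show ?thesis
    by (simp add: o_def lessThan_atLeast0 flip: sum_set_upt_conv_sum_list_nat)
qed

lemma vn_entropy_similar: "similar_mat A B \<Longrightarrow> vn_entropy A = vn_entropy B"
  by (simp add: vn_entropy_def char_poly_similar)

section \<open>Bell-diagonal states\<close>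

lemma bell_diag_eq: "bell_diag p1 p2 p3 p4 = mat_of_rows_list 4
  [[of_real ((p1 + p2) / 2), 0, 0, of_real ((p1 - p2) / 2)],
   [0, of_real ((p3 + p4) / 2), of_real ((p3 - p4) / 2), 0],
   [0, of_real ((p3 - p4) / 2), of_real ((p3 + p4) / 2), 0],
   [of_real ((p1 - p2) / 2), 0, 0, of_real ((p1 + p2) / 2)]]"
  by (rule eq_matI)
    (auto simp: bell_diag_def proj_def bell_phi_plus_def bell_phi_minus_def bell_psi_plus_def
      bell_psi_minus_def mat_of_rows_list_def less_Suc_eq numeral_eq_Suc field_simps
      simp flip: of_real_mult)

lemma bell_diag_carrier: "bell_diag p1 p2 p3 p4 \<in> carrier_mat 4 4"
  by (intro carrier_matI) (simp_all add: bell_diag_eq mat_of_rows_list_def)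

lemma ptrace_A_bell_diag:
  assumes "p1 + p2 + p3 + p4 = 1"
  shows "ptrace_A (bell_diag p1 p2 p3 p4) = mat_diag 2 (\<lambda>_. 1/2)"
  using assms
  by (intro eq_matI) (auto simp: ptrace_A_def bell_diag_eq mat_diag_def mat_of_rows_list_def
      less_Suc_eq numeral_eq_Suc complex_eq_iff field_simps)

(* The columns are sqrt 2 times the Bell vectors, so the inverse is half the transpose. *)
definition bell_basis :: "complex mat" where
  "bell_basis = mat_of_rows_list 4 [[1, 1, 0, 0], [0, 0, 1, 1], [0, 0, 1, -1], [1, -1, 0, 0]]"

lemma bell_basis_inverse:
  "bell_basis * ((1/2) \<cdot>\<^sub>m transpose_mat bell_basis) = 1\<^sub>m 4"
  "(1/2) \<cdot>\<^sub>m transpose_mat bell_basis * bell_basis = 1\<^sub>m 4"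
  by (rule eq_matI; simp add: bell_basis_def mat_of_rows_list_def scalar_prod_def less_Suc_eq
      numeral_eq_Suc atLeast0_lessThan_Suc; elim disjE; simp)+

lemma bell_diag_similar:
  "similar_mat (bell_diag p1 p2 p3 p4) (mat_diag 4 (\<lambda>i. of_real ([p1, p2, p3, p4] ! i)))"
proof (rule similar_matI[where n = 4])
  have "bell_basis \<in> carrier_mat 4 4"
    by (intro carrier_matI) (simp_all add: bell_basis_def mat_of_rows_list_def)
  then show "{bell_diag p1 p2 p3 p4, mat_diag 4 (\<lambda>i. of_real ([p1, p2, p3, p4] ! i)), bell_basis,
      (1/2) \<cdot>\<^sub>m transpose_mat bell_basis} \<subseteq> carrier_mat 4 4"
    using bell_diag_carrier by auto
  show "bell_diag p1 p2 p3 p4 = bell_basis * mat_diag 4 (\<lambda>i. of_real ([p1, p2, p3, p4] ! i))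
          * ((1/2) \<cdot>\<^sub>m transpose_mat bell_basis)"
    unfolding bell_diag_eq
    by (rule eq_matI) (auto simp: bell_basis_def mat_diag_def mat_of_rows_list_def
      scalar_prod_def less_Suc_eq numeral_eq_Suc atLeast0_lessThan_Suc field_simps)
qed (fact bell_basis_inverse)+

lemma cond_entropy_bell_diag:
  assumes "p1 + p2 + p3 + p4 = 1"
  shows "cond_entropy (bell_diag p1 p2 p3 p4)
           = ent_term p1 + ent_term p2 + ent_term p3 + ent_term p4 - 1"
proof -
  have "vn_entropy (bell_diag p1 p2 p3 p4) = ent_term p1 + ent_term p2 + ent_term p3 + ent_term p4"
    by (simp add: vn_entropy_similar[OF bell_diag_similar] vn_entropy_mat_diag lessThan_nat_numeral)
  moreover have "vn_entropy (ptrace_A (bell_diag p1 p2 p3 p4)) = 1"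
    by (simp add: ptrace_A_bell_diag[OF assms] vn_entropy_mat_diag lessThan_nat_numeral
        ent_term_def log_divide)
  ultimately show ?thesis by (simp add: cond_entropy_def)
qed

lemma qubit_obs_eq: "qubit_obs v1 v2 v3 = mat_of_rows_list 2
  [[of_real v3, of_real v1 - \<i> * of_real v2], [of_real v1 + \<i> * of_real v2, - of_real v3]]"
  by (rule eq_matI) (auto simp: qubit_obs_def pauli_x_def pauli_y_def pauli_z_def
      mat_of_rows_list_def less_Suc_eq numeral_eq_Suc)

(* The correlation matrix of a Bell-diagonal state is diagonal. *)
lemma mtrace_bell_diag_kron2:
  "mtrace (bell_diag p1 p2 p3 p4 * kron2 (qubit_obs a1 a2 a3) (qubit_obs b1 b2 b3))
   = of_real ((p1 - p2 + p3 - p4) * a1 * b1 + (p2 - p1 + p3 - p4) * a2 * b2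
              + (p1 + p2 - p3 - p4) * a3 * b3)"
  unfolding mtrace_def bell_diag_eq qubit_obs_eq kron2_def
  by (simp add: mat_of_rows_list_def scalar_prod_def lessThan_nat_numeral
      atLeastLessThan_nat_numeral complex_eq_iff field_simps)

lemma mtrace_mult_add_right:
  assumes "S \<in> carrier_mat n n" "A \<in> carrier_mat n n" "B \<in> carrier_mat n n"
  shows "mtrace (S * (A + B)) = mtrace (S * A) + mtrace (S * B)"
  using assms by (simp add: mult_add_distrib_mat mtrace_def sum.distrib)

lemma mtrace_mult_diff_right:
  assumes "S \<in> carrier_mat n n" "A \<in> carrier_mat n n" "B \<in> carrier_mat n n"
  shows "mtrace (S * (A - B)) = mtrace (S * A) - mtrace (S * B)"
  using assms by (simp add: mult_minus_distrib_mat mtrace_def sum_subtractf)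

lemma chsh_omega_bell_diag:
  "chsh_omega (bell_diag p1 p2 p3 p4) (qubit_obs x1 x2 x3) (qubit_obs y1 y2 y3)
     (qubit_obs u1 u2 u3) (qubit_obs v1 v2 v3)
   = 1/2 + ((p1 - p2 + p3 - p4) * (x1 * (u1 + v1) + y1 * (u1 - v1))
          + (p2 - p1 + p3 - p4) * (x2 * (u2 + v2) + y2 * (u2 - v2))
          + (p1 + p2 - p3 - p4) * (x3 * (u3 + v3) + y3 * (u3 - v3))) / 8"
proof -
  have kron2: "kron2 A B \<in> carrier_mat 4 4" for A B by (simp add: kron2_def)
  note distrib =
    mtrace_mult_add_right[OF bell_diag_carrier] mtrace_mult_diff_right[OF bell_diag_carrier]
  show ?thesis
    unfolding chsh_omega_def
    by (simp add: distrib kron2 add_carrier_mat mtrace_bell_diag_kron2 algebra_simps)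
qed

section \<open>Binary entropy as a function of the squared bias\<close>

lemma midpoint_concave_if_deriv_antimono:
  fixes f f' :: "real \<Rightarrow> real"
  assumes "a \<le> b" and cont: "continuous_on {a..b} f"
    and deriv: "\<And>x. a < x \<Longrightarrow> x < b \<Longrightarrow> (f has_real_derivative f' x) (at x)"
    and anti: "\<And>x y. a < x \<Longrightarrow> x \<le> y \<Longrightarrow> y < b \<Longrightarrow> f' y \<le> f' x"
  shows "f a + f b \<le> 2 * f ((a + b) / 2)"
proof (cases "a = b")
  case False
  define m where "m = (a + b) / 2"
  have m: "a < m" "m < b" using \<open>a \<le> b\<close> False by (auto simp: m_def)
  have mvt: "\<exists>z. x < z \<and> z < y \<and> f y - f x = (y - x) * f' z"
    if "a \<le> x" "x < y" "y \<le> b" for x y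
  proof -
    have "continuous_on {x..y} f" using cont that by (auto intro: continuous_on_subset)
    moreover have "f differentiable (at z)" if "x < z" "z < y" for z
      using deriv that \<open>a \<le> x\<close> \<open>y \<le> b\<close>
      by (meson real_differentiable_def less_le_trans le_less_trans)
    ultimately obtain l z
      where "x < z" "z < y" "(f has_real_derivative l) (at z)" "f y - f x = (y - x) * l"
      using MVT[OF \<open>x < y\<close>] by blast
    moreover have "l = f' z"
      using calculation deriv that by (meson DERIV_unique less_le_trans le_less_trans)
    ultimately show ?thesis by blast
  qed
  obtain z1 where z1: "a < z1" "z1 < m" "f m - f a = (m - a) * f' z1"
    using mvt[of a m] m by auto
  obtain z2 where z2: "m < z2" "z2 < b" "f b - f m = (b - m) * f' z2"
    using mvt[of m b] m by auto
  have "f' z2 \<le> f' z1" using z1 z2 by (intro anti) auto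
  moreover have "b - m = m - a" "0 < m - a" using m by (auto simp: m_def field_simps)
  ultimately have "f b - f m \<le> f m - f a" using z1(3) z2(3) by (simp add: mult_left_mono)
  then show ?thesis by (simp add: m_def)
qed simp

lemma artanh_nonneg: "0 \<le> x \<Longrightarrow> x < 1 \<Longrightarrow> 0 \<le> artanh (x::real)"
  by (simp add: artanh_def)

lemma artanh_le:
  fixes x :: real
  assumes "0 \<le> x" "x < 1"
  shows "artanh x \<le> x / (1 - x\<^sup>2)"
proof -
  have "(\<lambda>y. y - (1 - y\<^sup>2) * artanh y) 0 \<le> (\<lambda>y. y - (1 - y\<^sup>2) * artanh y) x"
  proof (rule DERIV_nonneg_imp_nondecreasing[OF \<open>0 \<le> x\<close>])
    fix y :: real assume y: "0 \<le> y" "y \<le> x"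
    then have "\<bar>y\<bar> < 1" using \<open>x < 1\<close> by simp
    moreover from this have "1 - y\<^sup>2 \<noteq> 0" by (simp flip: abs_square_less_1)
    ultimately have
      "((\<lambda>y. y - (1 - y\<^sup>2) * artanh y) has_real_derivative 2 * y * artanh y) (at y)"
      by (auto intro!: derivative_eq_intros)
    moreover have "0 \<le> 2 * y * artanh y" using y \<open>x < 1\<close> by (simp add: artanh_nonneg)
    ultimately show
      "\<exists>d. ((\<lambda>y. y - (1 - y\<^sup>2) * artanh y) has_real_derivative d) (at y) \<and> 0 \<le> d"
      by blast
  qed
  moreover have "0 < 1 - x\<^sup>2" using assms by (simp add: abs_square_less_1)
  ultimately show ?thesis by (simp add: field_simps)
qed

lemma artanh_div_mono:
  fixes a b :: real
  assumes "0 < a" "a \<le> b" "b < 1"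
  shows "artanh a / a \<le> artanh b / b"
proof (rule DERIV_nonneg_imp_nondecreasing[OF \<open>a \<le> b\<close>])
  fix x assume "a \<le> x" "x \<le> b"
  then have x: "0 < x" "x < 1" using assms by auto
  then have "\<bar>x\<bar> < 1" by simp
  then have
    "((\<lambda>x. artanh x / x) has_real_derivative (x / (1 - x\<^sup>2) - artanh x) / x\<^sup>2) (at x)"
    using x by (auto intro!: derivative_eq_intros simp: power2_eq_square)
  moreover have "0 \<le> (x / (1 - x\<^sup>2) - artanh x) / x\<^sup>2" using artanh_le[of x] x by simp
  ultimately show "\<exists>d. ((\<lambda>x. artanh x / x) has_real_derivative d) (at x) \<and> 0 \<le> d"
    by blast
qed

lemma ent_term_eq_ln: "0 \<le> x \<Longrightarrow> ent_term x = - (x * ln x) / ln 2"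
  by (cases "x = 0") (auto simp: ent_term_def log_def)

lemma continuous_on_ent_term: "continuous_on {0..1} ent_term"
proof -
  have "continuous_on {0..1} (\<lambda>x::real. x * ln x)"
  proof (rule continuous_on_IccI)
    show "((\<lambda>x::real. x * ln x) \<longlongrightarrow> 0 * ln 0) (at_right 0)"
      by simp real_asymp
  qed (auto intro!: tendsto_eq_intros)
  then have "continuous_on {0..1} (\<lambda>x::real. - (x * ln x) / ln 2)"
    by (intro continuous_on_divide continuous_on_minus continuous_on_const) auto
  moreover have
    "continuous_on {0..1} ent_term = continuous_on {0..1} (\<lambda>x::real. - (x * ln x) / ln 2)"
    by (rule continuous_on_cong) (auto simp: ent_term_eq_ln)
  ultimately show ?thesis by simp
qed

lemma continuous_on_bin_entropy: "continuous_on {0..1} bin_entropy"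
  unfolding bin_entropy_def
  by (intro continuous_intros continuous_on_compose2[OF continuous_on_ent_term]) auto

lemma bin_entropy_half_minus_has_derivative:
  assumes "\<bar>r\<bar> < 1"
  shows "((\<lambda>r. bin_entropy ((1 - r) / 2)) has_real_derivative - artanh r / ln 2) (at r)"
proof -
  let ?H = "\<lambda>r. 1 - ((1 - r) * ln (1 - r) + (1 + r) * ln (1 + r)) / (2 * ln 2)"
  have H_eq: "?H x = bin_entropy ((1 - x) / 2)" if "\<bar>x\<bar> < 1" for x
  proof -
    have pos: "0 < 1 - x" "0 < 1 + x" using that by auto
    have half: "1 - (1 - x) / 2 = (1 + x) / 2" by (simp add: field_simps)
    have ln_half:
      "ln ((1 - x) / 2) = ln (1 - x) - ln 2" "ln ((1 + x) / 2) = ln (1 + x) - ln 2"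
      using pos by (simp_all add: ln_div)
    show ?thesis
      using pos unfolding bin_entropy_def half by (simp add: ent_term_eq_ln ln_half field_simps)
  qed
  have pos: "0 < 1 - r" "0 < 1 + r" using assms by auto
  then have "(?H has_real_derivative - (ln (1 + r) - ln (1 - r)) / (2 * ln 2)) (at r)"
    by (auto intro!: derivative_eq_intros simp: diff_divide_distrib add_divide_distrib)
  moreover have "ln (1 + r) - ln (1 - r) = 2 * artanh r"
    using pos by (simp add: artanh_def ln_div)
  ultimately have "(?H has_real_derivative - artanh r / ln 2) (at r)" by simp
  then show ?thesis
    by (rule has_field_derivative_transform_within_open[where S = "{-1<..<1}"])
      (use assms H_eq in auto)
qed

definition sq_bias_entropy :: "real \<Rightarrow> real" where
  "sq_bias_entropy s = bin_entropy ((1 - sqrt s) / 2)"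

lemma bin_entropy_eq_sq_bias_entropy:
  assumes "0 \<le> q" "q \<le> 1"
  shows "bin_entropy q = sq_bias_entropy ((2 * q - 1)\<^sup>2)"
proof (cases "q \<le> 1/2")
  case True
  then have "(1 - sqrt ((2 * q - 1)\<^sup>2)) / 2 = q" by simp
  then show ?thesis by (simp add: sq_bias_entropy_def)
next
  case False
  then have "(1 - sqrt ((2 * q - 1)\<^sup>2)) / 2 = 1 - q" by simp
  then have "sq_bias_entropy ((2 * q - 1)\<^sup>2) = bin_entropy (1 - q)"
    by (simp only: sq_bias_entropy_def)
  then show ?thesis by (simp add: bin_entropy_def add.commute)
qed

lemma continuous_on_sq_bias_entropy: "continuous_on {0..1} sq_bias_entropy"
proof -
  have "(1 - sqrt s) / 2 \<in> {0..1}" if "s \<in> {0..1}" for s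
  proof -
    have "0 \<le> sqrt s" "sqrt s \<le> 1" using that by auto
    then show ?thesis by (simp del: real_sqrt_ge_0_iff)
  qed
  then show ?thesis
    unfolding sq_bias_entropy_def [abs_def]
    by (intro continuous_on_compose2[OF continuous_on_bin_entropy] continuous_intros) auto
qed

lemma sq_bias_entropy_has_derivative:
  assumes "0 < s" "s < 1"
  shows "(sq_bias_entropy has_real_derivative - artanh (sqrt s) / (2 * ln 2 * sqrt s)) (at s)"
proof -
  have "\<bar>sqrt s\<bar> < 1" using assms by simp
  from DERIV_chain2[OF bin_entropy_half_minus_has_derivative[OF this]
      DERIV_real_sqrt[OF \<open>0 < s\<close>]]
  show ?thesis
    unfolding sq_bias_entropy_def [abs_def] by (simp add: field_simps)
qed

lemma sq_bias_entropy_antimono: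
  assumes "0 \<le> x" "x \<le> y" "y \<le> 1"
  shows "sq_bias_entropy y \<le> sq_bias_entropy x"
proof (rule DERIV_nonpos_imp_decreasing_open[OF \<open>x \<le> y\<close>])
  fix s assume "x < s" "s < y"
  then have "0 < s" "s < 1" using assms by auto
  then show "\<exists>d. (sq_bias_entropy has_real_derivative d) (at s) \<and> d \<le> 0"
    using sq_bias_entropy_has_derivative artanh_nonneg[of "sqrt s"]
    by (intro exI conjI) (auto intro!: divide_nonneg_pos)
qed (rule continuous_on_subset[OF continuous_on_sq_bias_entropy], use assms in auto)

lemma sq_bias_entropy_midpoint_concave:
  assumes "0 \<le> x" "x \<le> 1" "0 \<le> y" "y \<le> 1"
  shows "sq_bias_entropy x + sq_bias_entropy y \<le> 2 * sq_bias_entropy ((x + y) / 2)"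
proof -
  have ordered: "sq_bias_entropy a + sq_bias_entropy b \<le> 2 * sq_bias_entropy ((a + b) / 2)"
    if "0 \<le> a" "a \<le> b" "b \<le> 1" for a b
  proof (rule midpoint_concave_if_deriv_antimono[OF \<open>a \<le> b\<close>])
    show "continuous_on {a..b} sq_bias_entropy"
      using that by (intro continuous_on_subset[OF continuous_on_sq_bias_entropy]) auto
    show "(sq_bias_entropy has_real_derivative - artanh (sqrt s) / (2 * ln 2 * sqrt s)) (at s)"
      if "a < s" "s < b" for s
      using that \<open>0 \<le> a\<close> \<open>b \<le> 1\<close> by (intro sq_bias_entropy_has_derivative) auto
    show "- artanh (sqrt t) / (2 * ln 2 * sqrt t)
            \<le> - artanh (sqrt s) / (2 * ln 2 * sqrt s)"
      if "a < s" "s \<le> t" "t < b" for s t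
    proof -
      have "artanh (sqrt s) / sqrt s \<le> artanh (sqrt t) / sqrt t"
        using that \<open>0 \<le> a\<close> \<open>b \<le> 1\<close> by (intro artanh_div_mono) auto
      then show ?thesis
        by (simp add: divide_right_mono mult.commute flip: divide_divide_eq_left)
    qed
  qed
  show ?thesis
    using ordered[of x y] ordered[of y x] assms by (cases "x \<le> y") (simp_all add: add.commute)
qed

lemma ent_term_le_log_product:
  fixes p r s :: real
  assumes "0 \<le> p" "p \<le> r" "p \<le> s"
  shows "ent_term p \<le> - p * log 2 r - p * log 2 s + (r * s - p) / ln 2"
proof (cases "p = 0")
  case True
  then show ?thesis using assms by (simp add: ent_term_def)
next
  case False
  then have "0 < p" "0 < r" "0 < s" using assms by auto
  \<comment> \<open>\<open>ln y \<le> y - 1\<close> at \<open>y = r s / p\<close>\<close>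
  have "p * ln (r * s / p) \<le> p * (r * s / p - 1)"
    using \<open>0 < p\<close> \<open>0 < r\<close> \<open>0 < s\<close> by (intro mult_left_mono ln_le_minus_one) auto
  also have "p * ln (r * s / p) = p * ln r + p * ln s - p * ln p"
    using \<open>0 < p\<close> \<open>0 < r\<close> \<open>0 < s\<close> by (simp add: ln_div ln_mult algebra_simps)
  also have "p * (r * s / p - 1) = r * s - p"
    using \<open>0 < p\<close> by (simp add: field_simps)
  finally have "- (p * ln p) / ln 2 \<le> (- p * ln r - p * ln s + (r * s - p)) / ln 2"
    by (intro divide_right_mono) auto
  then show ?thesis
    using \<open>0 < p\<close> by (simp add: ent_term_eq_ln log_def diff_divide_distrib add_divide_distrib)
qed

lemma ent_term_sum_le_bin_entropy_marginals:
  fixes a b c d :: real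
  assumes "0 \<le> a" "0 \<le> b" "0 \<le> c" "0 \<le> d" "a + b + c + d = 1"
  shows "ent_term a + ent_term b + ent_term c + ent_term d
           \<le> bin_entropy (a + b) + bin_entropy (a + c)"
proof -
  have "ent_term a \<le> - a * log 2 (a + b) - a * log 2 (a + c) + ((a + b) * (a + c) - a) / ln 2"
    "ent_term b \<le> - b * log 2 (a + b) - b * log 2 (b + d) + ((a + b) * (b + d) - b) / ln 2"
    "ent_term c \<le> - c * log 2 (c + d) - c * log 2 (a + c) + ((c + d) * (a + c) - c) / ln 2"
    "ent_term d \<le> - d * log 2 (c + d) - d * log 2 (b + d) + ((c + d) * (b + d) - d) / ln 2"
    using assms
      ent_term_le_log_product[of a "a + b" "a + c"] ent_term_le_log_product[of b "a + b" "b + d"]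
      ent_term_le_log_product[of c "c + d" "a + c"] ent_term_le_log_product[of d "c + d" "b + d"]
    by simp_all
  moreover have "((a + b) * (a + c) - a) / ln 2 + ((a + b) * (b + d) - b) / ln 2
      + ((c + d) * (a + c) - c) / ln 2 + ((c + d) * (b + d) - d) / ln 2 = 0"
  proof -
    have "((a + b) * (a + c) - a) + ((a + b) * (b + d) - b) + ((c + d) * (a + c) - c)
        + ((c + d) * (b + d) - d) = (a + b + c + d) * (a + b + c + d) - (a + b + c + d)"
      by (simp add: algebra_simps)
    then show ?thesis using assms(5) by (simp flip: add_divide_distrib)
  qed
  moreover have "bin_entropy (a + b) + bin_entropy (a + c)
      = (- a * log 2 (a + b) - b * log 2 (a + b)) + (- c * log 2 (c + d) - d * log 2 (c + d))
      + (- a * log 2 (a + c) - c * log 2 (a + c)) + (- b * log 2 (b + d) - d * log 2 (b + d))"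
  proof -
    have ent: "ent_term x = - x * log 2 x" if "0 \<le> x" for x
      using that by (cases "x = 0") (simp_all add: ent_term_def)
    have compl: "1 - (a + b) = c + d" "1 - (a + c) = b + d" using assms(5) by simp_all
    show ?thesis
      unfolding bin_entropy_def compl using assms by (simp add: ent algebra_simps)
  qed
  ultimately show ?thesis by linarith
qed

lemma ent_term_sum_le_sq_bias_entropy:
  fixes a b c d \<beta> :: real
  assumes "0 \<le> a" "0 \<le> b" "0 \<le> c" "0 \<le> d" "a + b + c + d = 1"
    and "0 \<le> \<beta>" "\<beta> \<le> 2 * sqrt ((2 * (a + b) - 1)\<^sup>2 + (2 * (a + c) - 1)\<^sup>2)"
  shows "ent_term a + ent_term b + ent_term c + ent_term d \<le> 2 * sq_bias_entropy (\<beta>\<^sup>2 / 8)"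
proof -
  define A B where "A = (2 * (a + b) - 1)\<^sup>2" "B = (2 * (a + c) - 1)\<^sup>2"
  have "A \<le> 1" "B \<le> 1" using assms unfolding A_B_def by (simp_all add: abs_square_le_1)
  have "ent_term a + ent_term b + ent_term c + ent_term d \<le> sq_bias_entropy A + sq_bias_entropy B"
    using ent_term_sum_le_bin_entropy_marginals[OF assms(1-5)] assms(1-5)
    by (simp add: A_B_def bin_entropy_eq_sq_bias_entropy)
  also have "\<dots> \<le> 2 * sq_bias_entropy ((A + B) / 2)"
    using \<open>A \<le> 1\<close> \<open>B \<le> 1\<close> by (intro sq_bias_entropy_midpoint_concave) (auto simp: A_B_def)
  also have "sq_bias_entropy ((A + B) / 2) \<le> sq_bias_entropy (\<beta>\<^sup>2 / 8)"
  proof (rule sq_bias_entropy_antimono)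
    have "\<beta>\<^sup>2 \<le> (2 * sqrt (A + B))\<^sup>2"
      using assms(6,7) unfolding A_B_def by (intro power_mono) auto
    then show "\<beta>\<^sup>2 / 8 \<le> (A + B) / 2" by (simp add: power_mult_distrib A_B_def)
  qed (use \<open>A \<le> 1\<close> \<open>B \<le> 1\<close> in auto)
  finally show ?thesis by simp
qed

section \<open>The Horodecki bound\<close>

lemma cauchy_schwarz3:
  fixes a1 a2 a3 b1 b2 b3 :: real
  shows "a1 * b1 + a2 * b2 + a3 * b3 \<le> sqrt (a1\<^sup>2 + a2\<^sup>2 + a3\<^sup>2) * sqrt (b1\<^sup>2 + b2\<^sup>2 + b3\<^sup>2)"
proof -
  have "(a1\<^sup>2 + a2\<^sup>2 + a3\<^sup>2) * (b1\<^sup>2 + b2\<^sup>2 + b3\<^sup>2) - (a1 * b1 + a2 * b2 + a3 * b3)\<^sup>2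
      = (a1 * b2 - a2 * b1)\<^sup>2 + (a1 * b3 - a3 * b1)\<^sup>2 + (a2 * b3 - a3 * b2)\<^sup>2"
    by (simp add: power2_eq_square algebra_simps)
  moreover have "0 \<le> (a1 * b2 - a2 * b1)\<^sup>2 + (a1 * b3 - a3 * b1)\<^sup>2 + (a2 * b3 - a3 * b2)\<^sup>2"
    by simp
  ultimately have "(a1 * b1 + a2 * b2 + a3 * b3)\<^sup>2 \<le> (a1\<^sup>2 + a2\<^sup>2 + a3\<^sup>2) * (b1\<^sup>2 + b2\<^sup>2 + b3\<^sup>2)"
    by linarith
  then show ?thesis by (simp add: real_le_rsqrt flip: real_sqrt_mult)
qed

(* Bessel's inequality for the first unit vector and the orthogonal pair u, w. *)
lemma orthogonal_coord_sq_le: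
  fixes u1 u2 u3 w1 w2 w3 :: real
  assumes "u1 * w1 + u2 * w2 + u3 * w3 = 0"
  shows "u1\<^sup>2 * (w1\<^sup>2 + w2\<^sup>2 + w3\<^sup>2) + w1\<^sup>2 * (u1\<^sup>2 + u2\<^sup>2 + u3\<^sup>2)
         \<le> (u1\<^sup>2 + u2\<^sup>2 + u3\<^sup>2) * (w1\<^sup>2 + w2\<^sup>2 + w3\<^sup>2)"
proof -
  have "(u1\<^sup>2 + u2\<^sup>2 + u3\<^sup>2) * (w1\<^sup>2 + w2\<^sup>2 + w3\<^sup>2)
          - (u1\<^sup>2 * (w1\<^sup>2 + w2\<^sup>2 + w3\<^sup>2) + w1\<^sup>2 * (u1\<^sup>2 + u2\<^sup>2 + u3\<^sup>2))
      = (u2 * w3 - u3 * w2)\<^sup>2 + (u2 * w2 + u3 * w3 - u1 * w1) * (u1 * w1 + u2 * w2 + u3 * w3)"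
    by (simp add: power2_eq_square algebra_simps)
  also have "\<dots> = (u2 * w3 - u3 * w2)\<^sup>2" using assms by simp
  finally show ?thesis by (metis diff_ge_0_iff_ge zero_le_power2)
qed

lemma weighted_sum_le_two_largest:
  fixes s1 s2 s3 c1 c2 c3 K :: real
  assumes "s3 \<le> s1" "s3 \<le> s2" "c1 \<le> K" "c2 \<le> K" "c1 + c2 + c3 = 2 * K"
  shows "s1 * c1 + s2 * c2 + s3 * c3 \<le> (s1 + s2) * K"
proof -
  have "(s1 - s3) * c1 \<le> (s1 - s3) * K" "(s2 - s3) * c2 \<le> (s2 - s3) * K"
    using assms by (simp_all add: mult_left_mono)
  moreover have c3: "c3 = 2 * K - c1 - c2" using assms(5) by simp
  ultimately show ?thesis unfolding c3 by (simp add: algebra_simps)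
qed

lemma sqrt_add_sqrt_le:
  fixes X Y U W M :: real
  assumes "0 \<le> X" "0 \<le> Y" "0 \<le> U" "0 \<le> W" "U + W = 4"
    and "X \<le> M * U" "Y \<le> M * W" "X * W + Y * U \<le> M * (U * W)"
  shows "sqrt X + sqrt Y \<le> 2 * sqrt M"
proof -
  define x y where "x = sqrt X" "y = sqrt Y"
  have X: "X = x\<^sup>2" "Y = y\<^sup>2" using assms by (simp_all add: x_y_def)
  have "(x + y)\<^sup>2 \<le> 4 * M"
  proof (cases "U = 0 \<or> W = 0")
    case True
    then show ?thesis
    proof
      assume "U = 0"
      then have "x = 0" "Y \<le> 4 * M" using assms X by auto
      then show ?thesis using X by simp
    next
      assume "W = 0"
      then have "y = 0" "X \<le> 4 * M" using assms X by auto
      then show ?thesis using X by simp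
    qed
  next
    case False
    then have "0 < U * W" using assms by simp
    \<comment> \<open>Cauchy-Schwarz with weights \<open>U\<close> and \<open>W\<close>\<close>
    have "U * W * (x + y)\<^sup>2 + (x * W - y * U)\<^sup>2 = (X * W + Y * U) * (U + W)"
      unfolding X by (simp add: power2_eq_square algebra_simps)
    then have "U * W * (x + y)\<^sup>2 \<le> (X * W + Y * U) * (U + W)"
      by (metis le_add_same_cancel1 zero_le_power2)
    also have "\<dots> \<le> U * W * (4 * M)"
      using assms by (simp add: algebra_simps)
    finally show ?thesis using \<open>0 < U * W\<close> mult_le_cancel_left_pos by blast
  qed
  moreover have "sqrt (4 * M) = 2 * sqrt M" by (simp add: real_sqrt_mult)
  ultimately show ?thesis unfolding x_y_def by (metis real_le_rsqrt)
qed

(* The left-hand side is the CHSH value of the observables x, y of Alice and u, v of Bob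
   on a state with correlation matrix diag(t1, t2, t3). *)
lemma horodecki_chsh_bound:
  fixes t1 t2 t3 x1 x2 x3 y1 y2 y3 u1 u2 u3 v1 v2 v3 :: real
  assumes "x1\<^sup>2 + x2\<^sup>2 + x3\<^sup>2 = 1" "y1\<^sup>2 + y2\<^sup>2 + y3\<^sup>2 = 1"
    and "u1\<^sup>2 + u2\<^sup>2 + u3\<^sup>2 = 1" "v1\<^sup>2 + v2\<^sup>2 + v3\<^sup>2 = 1"
    and "t3\<^sup>2 \<le> t1\<^sup>2" "t3\<^sup>2 \<le> t2\<^sup>2"
  shows "t1 * (x1 * (u1 + v1) + y1 * (u1 - v1)) + t2 * (x2 * (u2 + v2) + y2 * (u2 - v2))
           + t3 * (x3 * (u3 + v3) + y3 * (u3 - v3)) \<le> 2 * sqrt (t1\<^sup>2 + t2\<^sup>2)"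
proof -
  define p1 p2 p3 q1 q2 q3
    where "p1 = u1 + v1" "p2 = u2 + v2" "p3 = u3 + v3" "q1 = u1 - v1" "q2 = u2 - v2" "q3 = u3 - v3"
  define P Q where "P = p1\<^sup>2 + p2\<^sup>2 + p3\<^sup>2" "Q = q1\<^sup>2 + q2\<^sup>2 + q3\<^sup>2"
  define X Y where "X = t1\<^sup>2 * p1\<^sup>2 + t2\<^sup>2 * p2\<^sup>2 + t3\<^sup>2 * p3\<^sup>2"
    "Y = t1\<^sup>2 * q1\<^sup>2 + t2\<^sup>2 * q2\<^sup>2 + t3\<^sup>2 * q3\<^sup>2"
  define M where "M = t1\<^sup>2 + t2\<^sup>2"
  have PQ: "P + Q = 4" and orth: "p1 * q1 + p2 * q2 + p3 * q3 = 0"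
    using assms(3,4) unfolding P_Q_def p1_p2_p3_q1_q2_q3_def
    by (simp_all add: power2_eq_square algebra_simps)
  have tM: "t1\<^sup>2 \<le> M" "t2\<^sup>2 \<le> M" "t3\<^sup>2 \<le> M" using assms(5) by (simp_all add: M_def add_increasing2)
  have "t1 * (x1 * p1 + y1 * q1) + t2 * (x2 * p2 + y2 * q2) + t3 * (x3 * p3 + y3 * q3)
      = (x1 * (t1 * p1) + x2 * (t2 * p2) + x3 * (t3 * p3))
        + (y1 * (t1 * q1) + y2 * (t2 * q2) + y3 * (t3 * q3))"
    by (simp add: algebra_simps)
  also have "\<dots> \<le> sqrt X + sqrt Y"
    using cauchy_schwarz3[of x1 "t1 * p1" x2 "t2 * p2" x3 "t3 * p3"]
      cauchy_schwarz3[of y1 "t1 * q1" y2 "t2 * q2" y3 "t3 * q3"] assms(1,2)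
    unfolding X_Y_def by (simp add: power_mult_distrib)
  also have "\<dots> \<le> 2 * sqrt M"
  proof (rule sqrt_add_sqrt_le)
    show "X \<le> M * P" "Y \<le> M * Q"
      unfolding X_Y_def P_Q_def distrib_left using tM by (auto intro!: add_mono mult_right_mono)
    have "p1\<^sup>2 * Q + q1\<^sup>2 * P \<le> P * Q" "p2\<^sup>2 * Q + q2\<^sup>2 * P \<le> P * Q"
      using orthogonal_coord_sq_le[OF orth] orthogonal_coord_sq_le[of p2 q2 p3 q3 p1 q1] orth
      unfolding P_Q_def by (simp_all add: algebra_simps)
    moreover have
      "(p1\<^sup>2 * Q + q1\<^sup>2 * P) + (p2\<^sup>2 * Q + q2\<^sup>2 * P) + (p3\<^sup>2 * Q + q3\<^sup>2 * P) = 2 * (P * Q)"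
      unfolding P_Q_def by (simp add: algebra_simps)
    ultimately have "t1\<^sup>2 * (p1\<^sup>2 * Q + q1\<^sup>2 * P) + t2\<^sup>2 * (p2\<^sup>2 * Q + q2\<^sup>2 * P)
        + t3\<^sup>2 * (p3\<^sup>2 * Q + q3\<^sup>2 * P) \<le> (t1\<^sup>2 + t2\<^sup>2) * (P * Q)"
      using assms(5,6) by (intro weighted_sum_le_two_largest)
    then show "X * Q + Y * P \<le> M * (P * Q)" unfolding X_Y_def M_def by (simp add: algebra_simps)
  qed (use PQ in \<open>auto simp: X_Y_def P_Q_def\<close>)
  finally show ?thesis unfolding M_def p1_p2_p3_q1_q2_q3_def .
qed

section \<open>Entropy versus CHSH value\<close>

lemma ent_term_sum_le_chsh:
  fixes p1 p2 p3 p4 \<beta> :: real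
  assumes "0 \<le> p1" "0 \<le> p2" "0 \<le> p3" "0 \<le> p4" "p1 + p2 + p3 + p4 = 1"
    and unit: "x1\<^sup>2 + x2\<^sup>2 + x3\<^sup>2 = 1" "y1\<^sup>2 + y2\<^sup>2 + y3\<^sup>2 = 1"
      "u1\<^sup>2 + u2\<^sup>2 + u3\<^sup>2 = 1" "v1\<^sup>2 + v2\<^sup>2 + v3\<^sup>2 = 1"
    and \<beta>: "\<beta> = (p1 - p2 + p3 - p4) * (x1 * (u1 + v1) + y1 * (u1 - v1))
      + (p2 - p1 + p3 - p4) * (x2 * (u2 + v2) + y2 * (u2 - v2))
      + (p1 + p2 - p3 - p4) * (x3 * (u3 + v3) + y3 * (u3 - v3))"
    and "0 \<le> \<beta>"
  shows "ent_term p1 + ent_term p2 + ent_term p3 + ent_term p4 \<le> 2 * sq_bias_entropy (\<beta>\<^sup>2 / 8)"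
proof -
  define t1 t2 t3 where "t1 = 2 * (p1 + p3) - 1" "t2 = 2 * (p2 + p3) - 1" "t3 = 2 * (p1 + p2) - 1"
  have "p1 - p2 + p3 - p4 = t1" "p2 - p1 + p3 - p4 = t2" "p1 + p2 - p3 - p4 = t3"
    using assms(5) by (simp_all add: t1_t2_t3_def)
  then have \<beta>_t: "\<beta> = t1 * (x1 * (u1 + v1) + y1 * (u1 - v1))
      + t2 * (x2 * (u2 + v2) + y2 * (u2 - v2)) + t3 * (x3 * (u3 + v3) + y3 * (u3 - v3))"
    unfolding \<beta> by simp
  \<comment> \<open>Order \<open>p\<close> as a \<open>2 \<times> 2\<close> table whose marginals have the two largest biases \<open>\<bar>t\<^sub>k\<bar>\<close>.\<close>
  consider "t3\<^sup>2 \<le> t1\<^sup>2" "t3\<^sup>2 \<le> t2\<^sup>2" | "t1\<^sup>2 \<le> t2\<^sup>2" "t1\<^sup>2 \<le> t3\<^sup>2" | "t2\<^sup>2 \<le> t1\<^sup>2" "t2\<^sup>2 \<le> t3\<^sup>2"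
    by linarith
  then show ?thesis
  proof cases
    case 1
    then have "\<beta> \<le> 2 * sqrt (t1\<^sup>2 + t2\<^sup>2)"
      unfolding \<beta>_t using unit by (intro horodecki_chsh_bound)
    then show ?thesis
      using ent_term_sum_le_sq_bias_entropy[of p3 p1 p2 p4 \<beta>] assms(1-5) \<open>0 \<le> \<beta>\<close>
      by (simp add: t1_t2_t3_def ac_simps)
  next
    case 2
    then have "\<beta> \<le> 2 * sqrt (t2\<^sup>2 + t3\<^sup>2)"
      using horodecki_chsh_bound[of x2 x3 x1 y2 y3 y1 u2 u3 u1 v2 v3 v1 t1 t2 t3] unit
      by (simp add: \<beta>_t ac_simps)
    then show ?thesis
      using ent_term_sum_le_sq_bias_entropy[of p2 p1 p3 p4 \<beta>] assms(1-5) \<open>0 \<le> \<beta>\<close>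
      by (simp add: t1_t2_t3_def ac_simps)
  next
    case 3
    then have "\<beta> \<le> 2 * sqrt (t1\<^sup>2 + t3\<^sup>2)"
      using horodecki_chsh_bound[of x1 x3 x2 y1 y3 y2 u1 u3 u2 v1 v3 v2 t2 t1 t3] unit
      by (simp add: \<beta>_t ac_simps)
    then show ?thesis
      using ent_term_sum_le_sq_bias_entropy[of p1 p3 p2 p4 \<beta>] assms(1-5) \<open>0 \<le> \<beta>\<close>
      by (simp add: t1_t2_t3_def ac_simps)
  qed
qed

lemma sq_bias_entropy_square_div_8:
  assumes "0 \<le> \<beta>"
  shows "sq_bias_entropy (\<beta>\<^sup>2 / 8) = bin_entropy (1/2 - \<beta> / (4 * sqrt 2))"
proof -
  have "sqrt 8 = 2 * sqrt (2::real)"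
    using real_sqrt_mult[of 4 2] by simp
  then have "(1 - sqrt (\<beta>\<^sup>2 / 8)) / 2 = 1/2 - \<beta> / (4 * sqrt 2)"
    using assms by (simp add: real_sqrt_divide field_simps)
  then show ?thesis by (simp only: sq_bias_entropy_def)
qed

theorem lemma1:
  fixes p1 p2 p3 p4 :: real
    and a0 a1 b0 b1 :: "real \<times> real \<times> real"
  assumes "p1 \<ge> 0" "p2 \<ge> 0" "p3 \<ge> 0" "p4 \<ge> 0" "p1 + p2 + p3 + p4 = 1"
    and "\<And>v. v \<in> {a0, a1, b0, b1} \<Longrightarrow>
           (fst v)\<^sup>2 + (fst (snd v))\<^sup>2 + (snd (snd v))\<^sup>2 = 1"
    and "\<sigma> = bell_diag p1 p2 p3 p4"
    and "A0 = qubit_obs (fst a0) (fst (snd a0)) (snd (snd a0))"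
    and "A1 = qubit_obs (fst a1) (fst (snd a1)) (snd (snd a1))"
    and "B0 = qubit_obs (fst b0) (fst (snd b0)) (snd (snd b0))"
    and "B1 = qubit_obs (fst b1) (fst (snd b1)) (snd (snd b1))"
    and "\<omega> = chsh_omega \<sigma> A0 A1 B0 B1"
    and "3/4 \<le> \<omega>" "\<omega> \<le> (2 + sqrt 2) / 4"
  shows "cond_entropy \<sigma> \<le> 2 * bin_entropy (1/2 - (2 * \<omega> - 1) / sqrt 2) - 1"
proof -
  obtain x1 x2 x3 y1 y2 y3 u1 u2 u3 v1 v2 v3
    where vecs: "a0 = (x1, x2, x3)" "a1 = (y1, y2, y3)" "b0 = (u1, u2, u3)" "b1 = (v1, v2, v3)"
    using prod_cases3 by metis
  have unit: "x1\<^sup>2 + x2\<^sup>2 + x3\<^sup>2 = 1" "y1\<^sup>2 + y2\<^sup>2 + y3\<^sup>2 = 1"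
    "u1\<^sup>2 + u2\<^sup>2 + u3\<^sup>2 = 1" "v1\<^sup>2 + v2\<^sup>2 + v3\<^sup>2 = 1"
    using assms(6) by (auto simp: vecs)
  define \<beta> where "\<beta> = (p1 - p2 + p3 - p4) * (x1 * (u1 + v1) + y1 * (u1 - v1))
    + (p2 - p1 + p3 - p4) * (x2 * (u2 + v2) + y2 * (u2 - v2))
    + (p1 + p2 - p3 - p4) * (x3 * (u3 + v3) + y3 * (u3 - v3))"
  have \<omega>: "\<omega> = 1/2 + \<beta> / 8"
    using assms(7-12) by (simp add: vecs chsh_omega_bell_diag \<beta>_def)
  then have "0 \<le> \<beta>" using assms(13) by simp
  have "cond_entropy \<sigma> \<le> 2 * sq_bias_entropy (\<beta>\<^sup>2 / 8) - 1"
    using ent_term_sum_le_chsh[OF assms(1-5) unit \<beta>_def \<open>0 \<le> \<beta>\<close>]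
    by (simp add: assms(7) cond_entropy_bell_diag[OF assms(5)])
  moreover have "(2 * \<omega> - 1) / sqrt 2 = \<beta> / (4 * sqrt 2)" by (simp add: \<omega>)
  ultimately show ?thesis using sq_bias_entropy_square_div_8[OF \<open>0 \<le> \<beta>\<close>] by simp
qed

end
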